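(* Let $\theta$ be a random variable with a continuous distribution, let $u(q,\theta)$ be twice differentiable, strictly concave and monotone increasing in $q$ for every $\theta$, let $\pi_0>0$, $\pi_2>0$, $p\in(0,1)$, and let $\phi:\mathbb{R}\to\mathbb{R}$ be convex, twice differentiable, with $\phi(0)=\phi'(0)=0$ and $\phi(x)=\phi(-x)$. Define $J^b(f,q,\theta)=\pi_0 q-u(q,\theta)+\phi(f-q)$, $J^c(f,q,\theta)=\pi_0 q-u(q,\theta)-\pi_2(f-q)$, $q^b(f,\theta)=\arg\min_q J^b(f,q,\theta)$, $q^c(\theta)=\arg\min_q J^c(f,q,\theta)$, $$H(f)=p\,\mathbb{E}_\theta J^c(f,q^c(\theta),\theta)+(1-p)\,\mathbb{E}_\theta J^b(f,q^b(f,\theta),\theta),$$ and the expected marginal utility $$M(f)=p\,\mathbb{E}_\theta\frac{\partial u}{\partial q}(q^c(\theta),\theta)+(1-p)\,\mathbb{E}_\theta\frac{\partial u}{\partial q}(q^b(f,\theta),\theta).$$ Then the optimal baseline report $f^*$ (a minimizer of $H$) satisfies $\pi_0=M(f^* )$ and is a global minimizer of $H$. Moreover, the minimizer is unique when $\phi$ is strictly convex.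
   Context: This describes a consumer in an incentive-based demand response program with self-reported baseline $f$: with probability $p$ the consumer is called and paid $\pi_2$ per unit of reduction $f-q$; otherwise it is charged the penalty $\phi(f-q)$. $\pi_0$ is the retail price of electricity. The minimizers $q^b$, $q^c$ are assumed to exist and be characterized by their first-order conditions. *)

theory Defs
  imports "HOL-Analysis.Analysis" "HOL-Probability.Probability"
begin

definition strictly_convex_on :: "real set \<Rightarrow> (real \<Rightarrow> real) \<Rightarrow> bool" where
  "strictly_convex_on S g \<longleftrightarrow> convex S \<and>
     (\<forall>x\<in>S. \<forall>y\<in>S. \<forall>t. x \<noteq> y \<and> 0 < t \<and> t < 1 \<longrightarrow>
        g (t * x + (1 - t) * y) < t * g x + (1 - t) * g y)"

definition strictly_concave_on :: "real set \<Rightarrow> (real \<Rightarrow> real) \<Rightarrow> bool" where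
  "strictly_concave_on S g \<longleftrightarrow> strictly_convex_on S (\<lambda>x. - g x)"

definition twice_differentiable :: "(real \<Rightarrow> real) \<Rightarrow> bool" where
  "twice_differentiable g \<longleftrightarrow>
     (\<forall>x. g differentiable (at x)) \<and> (\<forall>x. deriv g differentiable (at x))"

text \<open>Cost when not called (baseline penalty) and when called (payment).\<close>
definition Jb :: "real \<Rightarrow> (real \<Rightarrow> real \<Rightarrow> real) \<Rightarrow> (real \<Rightarrow> real) \<Rightarrow> real \<Rightarrow> real \<Rightarrow> real \<Rightarrow> real" where
  "Jb pi0 u \<phi> f q \<theta> = pi0 * q - u q \<theta> + \<phi> (f - q)"

definition Jc :: "real \<Rightarrow> real \<Rightarrow> (real \<Rightarrow> real \<Rightarrow> real) \<Rightarrow> real \<Rightarrow> real \<Rightarrow> real \<Rightarrow> real" where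
  "Jc pi0 pi2 u f q \<theta> = pi0 * q - u q \<theta> - pi2 * (f - q)"

definition H :: "real measure \<Rightarrow> real \<Rightarrow> real \<Rightarrow> real \<Rightarrow> (real \<Rightarrow> real \<Rightarrow> real) \<Rightarrow> (real \<Rightarrow> real)
     \<Rightarrow> (real \<Rightarrow> real \<Rightarrow> real) \<Rightarrow> (real \<Rightarrow> real) \<Rightarrow> real \<Rightarrow> real" where
  "H D p pi0 pi2 u \<phi> qb qc f =
     p * (\<integral>\<theta>. Jc pi0 pi2 u f (qc \<theta>) \<theta> \<partial>D) + (1 - p) * (\<integral>\<theta>. Jb pi0 u \<phi> f (qb f \<theta>) \<theta> \<partial>D)"

definition EMU :: "real measure \<Rightarrow> real \<Rightarrow> (real \<Rightarrow> real \<Rightarrow> real)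
     \<Rightarrow> (real \<Rightarrow> real \<Rightarrow> real) \<Rightarrow> (real \<Rightarrow> real) \<Rightarrow> real \<Rightarrow> real" where
  "EMU D p u qb qc f =
     p * (\<integral>\<theta>. deriv (\<lambda>q. u q \<theta>) (qc \<theta>) \<partial>D)
     + (1 - p) * (\<integral>\<theta>. deriv (\<lambda>q. u q \<theta>) (qb f \<theta>) \<partial>D)"

end

(* For each theta, the consumption qb f theta when not called minimises
   q |-> (pi0 q - u q theta) + phi (f - q), the infimal convolution of a strictly convex
   and a convex function. By the envelope argument its value is convex in f with subgradient
   phi' (f - qb f theta) = pi0 - u' (qb f theta), while the cost when called is affine in f
   since u' (qc theta) = pi0 + pi2. Integrating, pi0 - M f is a subgradient of H at f, so
   pi0 = M f* makes f* a global minimiser. Conversely qb is monotone and 1-Lipschitz in f,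
   so M is continuous by dominated convergence, and a continuous subgradient vanishes at a
   minimiser. If phi is strictly convex, u' (qb f theta) is strictly decreasing in f, hence
   so is M, and the minimiser is unique. *)

theory Submission
  imports Defs
begin

lemma convex_on_UNIV_above_tangent:
  fixes g :: "real \<Rightarrow> real"
  assumes "convex_on UNIV g" and "(g has_real_derivative g') (at x)"
  shows "g x + g' * (y - x) \<le> g y"
  using convex_on_imp_above_tangent[OF assms(1), of x y g'] assms(2) by auto

lemma strictly_convex_onD:
  assumes "strictly_convex_on S g" "x \<in> S" "y \<in> S" "x \<noteq> y" "0 < t" "t < 1"
  shows "g (t * x + (1 - t) * y) < t * g x + (1 - t) * g y"
  using assms unfolding strictly_convex_on_def by blast

lemma strictly_convex_on_imp_convex_on:
  assumes "strictly_convex_on S g"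
  shows "convex_on S g"
proof (rule convex_onI)
  show "convex S" using assms unfolding strictly_convex_on_def by blast
  fix t x y :: real assume "x \<in> S" "y \<in> S" "0 < t" "t < 1"
  then show "g ((1 - t) *\<^sub>R x + t *\<^sub>R y) \<le> (1 - t) * g x + t * g y"
    using strictly_convex_onD[OF assms, of x y "1 - t"] by (cases "x = y") (auto simp: algebra_simps)
qed

lemma strictly_convex_on_add_linear:
  assumes "strictly_convex_on S g"
  shows "strictly_convex_on S (\<lambda>x. a * x + g x)"
  using assms unfolding strictly_convex_on_def by (auto simp: algebra_simps)

lemma strictly_convex_on_UNIV_above_tangent:
  fixes g :: "real \<Rightarrow> real"
  assumes sc: "strictly_convex_on UNIV g" and g': "(g has_real_derivative g') (at x)" and "x \<noteq> y"
  shows "g x + g' * (y - x) < g y"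
proof -
  define m where "m = x / 2 + y / 2"
  have "g m < g x / 2 + g y / 2"
    using strictly_convex_onD[OF sc _ _ \<open>x \<noteq> y\<close>, of "1/2"] by (simp add: m_def)
  moreover have "g x + g' * (m - x) \<le> g m"
    by (rule convex_on_UNIV_above_tangent[OF strictly_convex_on_imp_convex_on[OF sc] g'])
  ultimately show ?thesis by (simp add: m_def algebra_simps)
qed

lemma convex_on_UNIV_derivative_mono:
  fixes g :: "real \<Rightarrow> real"
  assumes "convex_on UNIV g" and "\<And>x. (g has_real_derivative g' x) (at x)"
  shows "mono g'"
proof (rule monoI)
  fix x y :: real assume "x \<le> y"
  have "g x + g' x * (y - x) \<le> g y" "g y + g' y * (x - y) \<le> g x"
    using convex_on_UNIV_above_tangent[OF assms] by auto
  then have "g' x * (y - x) \<le> g' y * (y - x)" by (simp add: algebra_simps)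
  with \<open>x \<le> y\<close> show "g' x \<le> g' y" by (cases "x = y") auto
qed

lemma strictly_convex_on_UNIV_derivative_strict_mono:
  fixes g :: "real \<Rightarrow> real"
  assumes "strictly_convex_on UNIV g" and "\<And>x. (g has_real_derivative g' x) (at x)"
  shows "strict_mono g'"
proof (rule strict_monoI)
  fix x y :: real assume "x < y"
  have "g x + g' x * (y - x) < g y" "g y + g' y * (x - y) < g x"
    using strictly_convex_on_UNIV_above_tangent[OF assms] \<open>x < y\<close> by auto
  then have "g' x * (y - x) < g' y * (y - x)" by (simp add: algebra_simps)
  with \<open>x < y\<close> show "g' x < g' y" by simp
qed

locale inf_convolution =
  fixes v v' \<phi> \<phi>' :: "real \<Rightarrow> real" and q :: "real \<Rightarrow> real"
  assumes v_strictly_convex: "strictly_convex_on UNIV v"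
    and v_deriv: "\<And>x. (v has_real_derivative v' x) (at x)"
    and \<phi>_convex: "convex_on UNIV \<phi>"
    and \<phi>_deriv: "\<And>x. (\<phi> has_real_derivative \<phi>' x) (at x)"
    and q_min: "\<And>f y. v (q f) + \<phi> (f - q f) \<le> v y + \<phi> (f - y)"
begin

lemma v'_strict_mono: "strict_mono v'"
  by (rule strictly_convex_on_UNIV_derivative_strict_mono[OF v_strictly_convex v_deriv])

lemma \<phi>'_mono: "mono \<phi>'"
  by (rule convex_on_UNIV_derivative_mono[OF \<phi>_convex \<phi>_deriv])

lemma minimizer_foc: "v' (q f) = \<phi>' (f - q f)"
proof -
  have "((\<lambda>y. v y + \<phi> (f - y)) has_real_derivative v' (q f) + \<phi>' (f - q f) * - 1) (at (q f))"
    by (intro derivative_intros v_deriv DERIV_chain2[OF \<phi>_deriv]) (auto intro!: derivative_eq_intros)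
  then have "v' (q f) + \<phi>' (f - q f) * - 1 = 0"
    by (rule DERIV_local_min[of _ _ _ 1]) (auto intro: q_min)
  then show ?thesis by simp
qed

lemma minimizer_mono: "mono q"
proof (rule monoI, rule ccontr)
  fix f1 f2 :: real assume "f1 \<le> f2" and "\<not> q f1 \<le> q f2"
  have "v' (q f2) < v' (q f1)"
    using \<open>\<not> q f1 \<le> q f2\<close> strict_monoD[OF v'_strict_mono] by simp
  moreover have "\<phi>' (f1 - q f1) \<le> \<phi>' (f2 - q f2)"
    using \<open>f1 \<le> f2\<close> \<open>\<not> q f1 \<le> q f2\<close> monoD[OF \<phi>'_mono] by simp
  ultimately show False by (simp add: minimizer_foc)
qed

lemma minimizer_increment_le: "f1 \<le> f2 \<Longrightarrow> q f2 - q f1 \<le> f2 - f1"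
proof (rule ccontr)
  assume "f1 \<le> f2" and "\<not> q f2 - q f1 \<le> f2 - f1"
  have "v' (q f1) < v' (q f2)"
    using \<open>f1 \<le> f2\<close> \<open>\<not> q f2 - q f1 \<le> f2 - f1\<close> strict_monoD[OF v'_strict_mono] by simp
  moreover have "\<phi>' (f2 - q f2) \<le> \<phi>' (f1 - q f1)"
    using \<open>\<not> q f2 - q f1 \<le> f2 - f1\<close> monoD[OF \<phi>'_mono] by simp
  ultimately show False by (simp add: minimizer_foc)
qed

lemma isCont_minimizer: "isCont q f"
proof -
  have "dist (q x) (q y) \<le> 1 * dist x y" for x y
    using minimizer_increment_le[of x y] minimizer_increment_le[of y x] monoD[OF minimizer_mono, of x y]
      monoD[OF minimizer_mono, of y x]
    by (cases "x \<le> y") (auto simp: dist_real_def)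
  then have "continuous_on UNIV q"
    by (intro lipschitz_on_continuous_on[where L = 1] lipschitz_onI) auto
  then show ?thesis by (simp add: continuous_on_eq_continuous_at)
qed

lemma value_subgradient:
  "v (q f0) + \<phi> (f0 - q f0) + \<phi>' (f0 - q f0) * (f - f0) \<le> v (q f) + \<phi> (f - q f)"
proof -
  have "v (q f0) + v' (q f0) * (q f - q f0) \<le> v (q f)"
    by (rule convex_on_UNIV_above_tangent[OF strictly_convex_on_imp_convex_on[OF v_strictly_convex] v_deriv])
  moreover have "\<phi> (f0 - q f0) + \<phi>' (f0 - q f0) * ((f - q f) - (f0 - q f0)) \<le> \<phi> (f - q f)"
    by (rule convex_on_UNIV_above_tangent[OF \<phi>_convex \<phi>_deriv])
  ultimately show ?thesis by (simp add: minimizer_foc algebra_simps)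
qed

lemma minimizer_derivative_strict_mono:
  assumes "strictly_convex_on UNIV \<phi>"
  shows "strict_mono (\<lambda>f. v' (q f))"
proof (rule strict_monoI)
  fix f1 f2 :: real assume "f1 < f2"
  then have "q f1 \<le> q f2" using monoD[OF minimizer_mono] by simp
  then consider "q f1 < q f2" | "q f1 = q f2" by linarith
  then show "v' (q f1) < v' (q f2)"
  proof cases
    case 1 then show ?thesis using strict_monoD[OF v'_strict_mono] by blast
  next
    case 2
    have "\<phi>' (f1 - q f1) < \<phi>' (f2 - q f1)"
      using strictly_convex_on_UNIV_derivative_strict_mono[OF assms \<phi>_deriv] \<open>f1 < f2\<close>
      by (simp add: strict_mono_less)
    with 2 show ?thesis using minimizer_foc[of f1] minimizer_foc[of f2] by simp
  qed
qed

end

lemma continuous_subgradient_vanishes_at_minimum: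
  fixes h g :: "real \<Rightarrow> real"
  assumes subgradient: "\<And>x y. h x + g x * (y - x) \<le> h y"
    and min: "\<And>y. h x0 \<le> h y" and cont: "isCont g x0"
  shows "g x0 = 0"
proof -
  have sign: "0 \<le> g y * (y - x0)" for y
    using subgradient[of y x0] min[of y] by (simp add: right_diff_distrib)
  have pos: "0 \<le> g y" if "x0 < y" for y
    using sign[of y] that by (auto simp: zero_le_mult_iff)
  have neg: "g y \<le> 0" if "y < x0" for y
    using sign[of y] that by (auto simp: zero_le_mult_iff)
  have "0 \<le> g x0"
  proof (rule tendsto_lowerbound)
    show "(g \<longlongrightarrow> g x0) (at_right x0)"
      using cont by (simp add: isCont_def filterlim_at_split)
    show "\<forall>\<^sub>F y in at_right x0. 0 \<le> g y"
      using eventually_at_right_less[of x0] by (rule eventually_mono) (use pos in auto)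
  qed simp
  moreover have "g x0 \<le> 0"
  proof (rule tendsto_upperbound)
    show "(g \<longlongrightarrow> g x0) (at_left x0)"
      using cont by (simp add: isCont_def filterlim_at_split)
    show "\<forall>\<^sub>F y in at_left x0. g y \<le> 0"
      using eventually_at_left_real[of "x0 - 1" x0] by (rule eventually_mono) (use neg in auto)
  qed simp
  ultimately show ?thesis by simp
qed

lemma isCont_integral_antimono_parameter:
  fixes F :: "real \<Rightarrow> 'a \<Rightarrow> real"
  assumes int: "\<And>t. integrable M (F t)"
    and antimono: "\<And>x. antimono (\<lambda>t. F t x)"
    and cont: "\<And>x. isCont (\<lambda>t. F t x) t0"
  shows "isCont (\<lambda>t. \<integral>x. F t x \<partial>M) t0"
proof (rule continuous_at_sequentiallyI)
  fix s assume "s \<longlonglongrightarrow> t0"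
  then obtain N where near: "\<And>n. N \<le> n \<Longrightarrow> \<bar>s n - t0\<bar> < 1"
    using LIMSEQ_D[of s t0 1] by auto
  have "(\<lambda>n. \<integral>x. F (s (n + N)) x \<partial>M) \<longlonglongrightarrow> (\<integral>x. F t0 x \<partial>M)"
  proof (rule integral_dominated_convergence[where w = "\<lambda>x. \<bar>F (t0 - 1) x\<bar> + \<bar>F (t0 + 1) x\<bar>"])
    show "integrable M (\<lambda>x. \<bar>F (t0 - 1) x\<bar> + \<bar>F (t0 + 1) x\<bar>)"
      using int by auto
    show "AE x in M. (\<lambda>n. F (s (n + N)) x) \<longlonglongrightarrow> F t0 x"
      using isCont_tendsto_compose[OF cont LIMSEQ_ignore_initial_segment[OF \<open>s \<longlonglongrightarrow> t0\<close>]] by simp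
    show "AE x in M. norm (F (s (n + N)) x) \<le> \<bar>F (t0 - 1) x\<bar> + \<bar>F (t0 + 1) x\<bar>" for n
    proof (rule AE_I2)
      fix x
      have "t0 - 1 \<le> s (n + N)" "s (n + N) \<le> t0 + 1"
        using near[of "n + N"] by auto
      then have "F (t0 + 1) x \<le> F (s (n + N)) x" "F (s (n + N)) x \<le> F (t0 - 1) x"
        by (auto intro: antimonoD[OF antimono])
      then show "norm (F (s (n + N)) x) \<le> \<bar>F (t0 - 1) x\<bar> + \<bar>F (t0 + 1) x\<bar>"
        unfolding real_norm_def by arith
    qed
  qed (use int in \<open>auto intro: borel_measurable_integrable\<close>)
  then show "(\<lambda>n. \<integral>x. F (s n) x \<partial>M) \<longlonglongrightarrow> (\<integral>x. F t0 x \<partial>M)"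
    by (rule LIMSEQ_offset)
qed

locale demand_response = prob_space D
  for D :: "real measure" +
  fixes u :: "real \<Rightarrow> real \<Rightarrow> real" and \<phi> :: "real \<Rightarrow> real"
    and pi0 pi2 p :: real and qb :: "real \<Rightarrow> real \<Rightarrow> real" and qc :: "real \<Rightarrow> real"
  assumes u_twice: "\<And>\<theta>. twice_differentiable (\<lambda>q. u q \<theta>)"
    and u_concave: "\<And>\<theta>. strictly_concave_on UNIV (\<lambda>q. u q \<theta>)"
    and p_lt1: "p < 1"
    and phi_convex: "convex_on UNIV \<phi>"
    and phi_twice: "twice_differentiable \<phi>"
    and qb_min: "\<And>f \<theta> q. Jb pi0 u \<phi> f (qb f \<theta>) \<theta> \<le> Jb pi0 u \<phi> f q \<theta>"
    and qc_min: "\<And>f \<theta> q. Jc pi0 pi2 u f (qc \<theta>) \<theta> \<le> Jc pi0 pi2 u f q \<theta>"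
    and int_Jc: "\<And>f. integrable D (\<lambda>\<theta>. Jc pi0 pi2 u f (qc \<theta>) \<theta>)"
    and int_Jb: "\<And>f. integrable D (\<lambda>\<theta>. Jb pi0 u \<phi> f (qb f \<theta>) \<theta>)"
    and int_dub: "\<And>f. integrable D (\<lambda>\<theta>. deriv (\<lambda>q. u q \<theta>) (qb f \<theta>))"
begin

abbreviation marginal_utility :: "real \<Rightarrow> real \<Rightarrow> real"
  where "marginal_utility \<theta> \<equiv> deriv (\<lambda>q. u q \<theta>)"

abbreviation cost :: "real \<Rightarrow> real"
  where "cost \<equiv> H D p pi0 pi2 u \<phi> qb qc"

abbreviation emu :: "real \<Rightarrow> real"
  where "emu \<equiv> EMU D p u qb qc"

lemma utility_has_derivative: "((\<lambda>q. u q \<theta>) has_real_derivative marginal_utility \<theta> q) (at q)"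
  using u_twice unfolding twice_differentiable_def by (simp add: DERIV_deriv_iff_real_differentiable)

lemma isCont_marginal_utility: "isCont (marginal_utility \<theta>) q"
  using u_twice unfolding twice_differentiable_def by (blast intro: differentiable_imp_continuous_within)

lemma consumer_problem:
  "inf_convolution (\<lambda>q. pi0 * q - u q \<theta>) (\<lambda>q. pi0 - marginal_utility \<theta> q) \<phi> (deriv \<phi>) (\<lambda>f. qb f \<theta>)"
proof
  show "strictly_convex_on UNIV (\<lambda>q. pi0 * q - u q \<theta>)"
    using strictly_convex_on_add_linear[of UNIV "\<lambda>q. - u q \<theta>" pi0] u_concave
    by (simp add: strictly_concave_on_def)
  show "((\<lambda>q. pi0 * q - u q \<theta>) has_real_derivative pi0 - marginal_utility \<theta> q) (at q)" for q
    by (auto intro!: derivative_eq_intros utility_has_derivative)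
  show "(\<phi> has_real_derivative deriv \<phi> x) (at x)" for x
    using phi_twice unfolding twice_differentiable_def by (simp add: DERIV_deriv_iff_real_differentiable)
  show "pi0 * qb f \<theta> - u (qb f \<theta>) \<theta> + \<phi> (f - qb f \<theta>) \<le> pi0 * y - u y \<theta> + \<phi> (f - y)" for f y
    using qb_min[of f \<theta> y] by (simp add: Jb_def)
qed (fact phi_convex)

lemma called_marginal_utility: "marginal_utility \<theta> (qc \<theta>) = pi0 + pi2"
proof -
  have "((\<lambda>q. Jc pi0 pi2 u 0 q \<theta>) has_real_derivative pi0 - marginal_utility \<theta> (qc \<theta>) + pi2) (at (qc \<theta>))"
    unfolding Jc_def by (auto intro!: derivative_eq_intros utility_has_derivative)
  then have "pi0 - marginal_utility \<theta> (qc \<theta>) + pi2 = 0"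
    by (rule DERIV_local_min[of _ _ _ 1]) (auto intro: qc_min)
  then show ?thesis by simp
qed

lemma emu_eq: "emu f = p * (pi0 + pi2) + (1 - p) * (\<integral>\<theta>. marginal_utility \<theta> (qb f \<theta>) \<partial>D)"
  unfolding EMU_def called_marginal_utility by (simp add: prob_space)

lemma integral_Jc_eq:
  "(\<integral>\<theta>. Jc pi0 pi2 u f (qc \<theta>) \<theta> \<partial>D) = (\<integral>\<theta>. Jc pi0 pi2 u f0 (qc \<theta>) \<theta> \<partial>D) - pi2 * (f - f0)"
proof -
  have "Jc pi0 pi2 u f (qc \<theta>) \<theta> = Jc pi0 pi2 u f0 (qc \<theta>) \<theta> - pi2 * (f - f0)" for \<theta>
    unfolding Jc_def by (simp add: algebra_simps)
  then show ?thesis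
    by (simp add: Bochner_Integration.integral_diff[OF int_Jc] prob_space)
qed

lemma integral_Jb_subgradient:
  "(\<integral>\<theta>. Jb pi0 u \<phi> f0 (qb f0 \<theta>) \<theta> \<partial>D) + (pi0 - (\<integral>\<theta>. marginal_utility \<theta> (qb f0 \<theta>) \<partial>D)) * (f - f0)
     \<le> (\<integral>\<theta>. Jb pi0 u \<phi> f (qb f \<theta>) \<theta> \<partial>D)"
proof -
  have "Jb pi0 u \<phi> f0 (qb f0 \<theta>) \<theta> + (pi0 - marginal_utility \<theta> (qb f0 \<theta>)) * (f - f0)
      \<le> Jb pi0 u \<phi> f (qb f \<theta>) \<theta>" for \<theta>
    using inf_convolution.value_subgradient[OF consumer_problem[of \<theta>], of f0 f]
      inf_convolution.minimizer_foc[OF consumer_problem[of \<theta>], of f0]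
    by (simp add: Jb_def)
  then have "(\<integral>\<theta>. Jb pi0 u \<phi> f0 (qb f0 \<theta>) \<theta> + (pi0 - marginal_utility \<theta> (qb f0 \<theta>)) * (f - f0) \<partial>D)
      \<le> (\<integral>\<theta>. Jb pi0 u \<phi> f (qb f \<theta>) \<theta> \<partial>D)"
    using int_Jb int_dub by (intro integral_mono) auto
  then show ?thesis
    using int_Jb int_dub by (simp add: left_diff_distrib prob_space)
qed

lemma cost_subgradient: "cost f0 + (pi0 - emu f0) * (f - f0) \<le> cost f"
proof -
  have "(1 - p) * ((\<integral>\<theta>. Jb pi0 u \<phi> f0 (qb f0 \<theta>) \<theta> \<partial>D)
          + (pi0 - (\<integral>\<theta>. marginal_utility \<theta> (qb f0 \<theta>) \<partial>D)) * (f - f0))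
      \<le> (1 - p) * (\<integral>\<theta>. Jb pi0 u \<phi> f (qb f \<theta>) \<theta> \<partial>D)"
    using integral_Jb_subgradient p_lt1 by (intro mult_left_mono) auto
  then show ?thesis
    unfolding H_def emu_eq integral_Jc_eq[of f f0] by (simp add: algebra_simps)
qed

lemma isCont_emu: "isCont emu f"
proof -
  have "isCont (\<lambda>f. \<integral>\<theta>. marginal_utility \<theta> (qb f \<theta>) \<partial>D) f"
  proof (rule isCont_integral_antimono_parameter)
    fix \<theta>
    interpret inf_convolution "\<lambda>q. pi0 * q - u q \<theta>" "\<lambda>q. pi0 - marginal_utility \<theta> q" \<phi> "deriv \<phi>" "\<lambda>f. qb f \<theta>"
      by (rule consumer_problem)
    show "antimono (\<lambda>f. marginal_utility \<theta> (qb f \<theta>))"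
      using minimizer_mono strict_mono_mono[OF v'_strict_mono] by (auto simp: monotone_on_def)
    show "isCont (\<lambda>f. marginal_utility \<theta> (qb f \<theta>)) f"
      by (rule isCont_o2[OF isCont_minimizer isCont_marginal_utility])
  qed (fact int_dub)
  then show ?thesis unfolding emu_eq by (intro continuous_intros)
qed

lemma inj_emu:
  assumes "strictly_convex_on UNIV \<phi>"
  shows "inj emu"
proof (rule linorder_injI)
  fix f1 f2 :: real assume "f1 < f2"
  have "marginal_utility \<theta> (qb f2 \<theta>) < marginal_utility \<theta> (qb f1 \<theta>)" for \<theta>
    using strict_monoD[OF inf_convolution.minimizer_derivative_strict_mono[OF consumer_problem assms]
      \<open>f1 < f2\<close>] by simp
  then have "(\<integral>\<theta>. marginal_utility \<theta> (qb f2 \<theta>) \<partial>D) < (\<integral>\<theta>. marginal_utility \<theta> (qb f1 \<theta>) \<partial>D)"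
    by (intro integral_less_AE_space int_dub) (auto simp: emeasure_space_1)
  with p_lt1 show "emu f1 \<noteq> emu f2"
    unfolding emu_eq by simp
qed

end

theorem theorem1:
  fixes D :: "real measure"
    and u :: "real \<Rightarrow> real \<Rightarrow> real"
    and \<phi> :: "real \<Rightarrow> real"
    and pi0 pi2 p :: real
    and qb :: "real \<Rightarrow> real \<Rightarrow> real"
    and qc :: "real \<Rightarrow> real"
  assumes D_prob: "prob_space D" and D_borel: "sets D = sets borel"
    and D_cont: "\<And>x. measure D {x} = 0"
    and u_twice: "\<And>\<theta>. twice_differentiable (\<lambda>q. u q \<theta>)"
    and u_concave: "\<And>\<theta>. strictly_concave_on UNIV (\<lambda>q. u q \<theta>)"
    and u_mono: "\<And>\<theta>. mono (\<lambda>q. u q \<theta>)"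
    and pi0_pos: "pi0 > 0" and pi2_pos: "pi2 > 0"
    and p_pos: "0 < p" and p_lt1: "p < 1"
    and phi_convex: "convex_on UNIV \<phi>"
    and phi_twice: "twice_differentiable \<phi>"
    and phi_0: "\<phi> 0 = 0" and dphi_0: "deriv \<phi> 0 = 0"
    and phi_even: "\<And>x. \<phi> x = \<phi> (- x)"
    and qb_min: "\<And>f \<theta> q. Jb pi0 u \<phi> f (qb f \<theta>) \<theta> \<le> Jb pi0 u \<phi> f q \<theta>"
    and qc_min: "\<And>f \<theta> q. Jc pi0 pi2 u f (qc \<theta>) \<theta> \<le> Jc pi0 pi2 u f q \<theta>"
    and int_Jc: "\<And>f. integrable D (\<lambda>\<theta>. Jc pi0 pi2 u f (qc \<theta>) \<theta>)"
    and int_Jb: "\<And>f. integrable D (\<lambda>\<theta>. Jb pi0 u \<phi> f (qb f \<theta>) \<theta>)"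
    and int_duc: "integrable D (\<lambda>\<theta>. deriv (\<lambda>q. u q \<theta>) (qc \<theta>))"
    and int_dub: "\<And>f. integrable D (\<lambda>\<theta>. deriv (\<lambda>q. u q \<theta>) (qb f \<theta>))"
  shows "(\<forall>fs. (\<forall>f. H D p pi0 pi2 u \<phi> qb qc fs \<le> H D p pi0 pi2 u \<phi> qb qc f)
                \<longrightarrow> pi0 = EMU D p u qb qc fs)
       \<and> (\<forall>fs. pi0 = EMU D p u qb qc fs
                \<longrightarrow> (\<forall>f. H D p pi0 pi2 u \<phi> qb qc fs \<le> H D p pi0 pi2 u \<phi> qb qc f))
       \<and> (strictly_convex_on UNIV \<phi> \<longrightarrow>
            (\<forall>f1 f2. (\<forall>f. H D p pi0 pi2 u \<phi> qb qc f1 \<le> H D p pi0 pi2 u \<phi> qb qc f)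
                   \<and> (\<forall>f. H D p pi0 pi2 u \<phi> qb qc f2 \<le> H D p pi0 pi2 u \<phi> qb qc f)
                   \<longrightarrow> f1 = f2))"
proof -
  interpret demand_response D u \<phi> pi0 pi2 p qb qc
    using D_prob u_twice u_concave p_lt1 phi_convex phi_twice qb_min qc_min int_Jc int_Jb int_dub
    by (simp add: demand_response_def demand_response_axioms_def)
  have minimizer_iff: "(\<forall>f. cost fs \<le> cost f) \<longleftrightarrow> pi0 = emu fs" for fs
  proof
    assume "\<forall>f. cost fs \<le> cost f"
    then have "pi0 - emu fs = 0"
      using cost_subgradient
      by (intro continuous_subgradient_vanishes_at_minimum[where h = cost]) (auto intro: continuous_intros isCont_emu)
    then show "pi0 = emu fs" by simp
  qed (use cost_subgradient[of fs] in simp)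
  moreover have "f1 = f2"
    if "strictly_convex_on UNIV \<phi>" "\<forall>f. cost f1 \<le> cost f" "\<forall>f. cost f2 \<le> cost f" for f1 f2
    using injD[OF inj_emu[OF that(1)]] minimizer_iff that(2,3) by metis
  ultimately show ?thesis by blast
qed

end
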